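(* Let $\mathcal{D}$ be a distribution supported on $[0,1]$, let $0<p_1<p_2<\cdots<p_T\le1$, set $p_{T+1}=1$, and let $Q_t=\sup\{y:\Pr_{x\sim\mathcal{D}}(x\le y)\le p_t\}$ for $t=1,\dots,T$. Define generalized binomial voting as the scoring rule in which each voter gives the alternative she ranks in position $k$ the score $$s_k=\sum_{t=1}^T Q_t\left(\sum_{\ell=k}^m\binom{m}{\ell}(1-p_t)^\ell p_t^{m-\ell}-\sum_{\ell=k}^m\binom{m}{\ell}(1-p_{t+1})^\ell p_{t+1}^{m-\ell}\right),$$ selecting an alternative with the largest total score (ties broken arbitrarily). Then for all $n,m$ and every preference profile $\sigma$, the selected alternative $g(\sigma)$ satisfies $\mathbb{E}[\mathrm{sw}(g(\sigma),u)]\ge\beta\max_{j\in A}\mathbb{E}[\mathrm{sw}(j,u)]$ with $\beta=\sum_{s=1}^T Q_s(p_{s+1}-p_s)$.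
   Context: There are $n$ voters and $m$ alternatives $A=\{1,\dots,m\}$. A preference profile $\sigma$ consists of a ranking of $A$ for each voter; position $1$ is the top. Given $\mathcal{D}$ and $\sigma$, a random utility profile $u$ consistent with $\sigma$ is generated as follows: independently for each voter $i$, draw $m$ i.i.d. samples from $\mathcal{D}$ and assign them, from highest to lowest, to the alternatives in the order of voter $i$'s ranking. The social welfare of $j$ is $\mathrm{sw}(j,u)=\sum_i u_{ij}$; expectations are over $u$. *)

theory Defs
  imports "HOL-Probability.Probability"
begin

(* k-th largest (k = 1 is the largest) among the values x 0, ..., x (m-1) *)
definition kth_largest :: "nat \<Rightarrow> nat \<Rightarrow> (nat \<Rightarrow> real) \<Rightarrow> real" where
  "kth_largest m k x = rev (sort (map x [0..<m])) ! (k - 1)"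

(* A preference profile: pos i j \<in> {1..m} is the position of alternative j
   in voter i's ranking (position 1 = top); each pos i is a bijection A \<rightarrow> {1..m}. *)
definition is_profile :: "nat \<Rightarrow> nat \<Rightarrow> (nat \<Rightarrow> nat \<Rightarrow> nat) \<Rightarrow> bool" where
  "is_profile n m pos \<longleftrightarrow> (\<forall>i<n. bij_betw (pos i) {1..m} {1..m})"

(* Sample space: for each voter i < n, m i.i.d. samples \<omega> (i,l), l < m, from D *)
definition sample_space :: "nat \<Rightarrow> nat \<Rightarrow> real measure \<Rightarrow> (nat \<times> nat \<Rightarrow> real) measure" where
  "sample_space n m D = PiM ({..<n} \<times> {..<m}) (\<lambda>_. D)"

(* random utility u_ij consistent with the profile: the samples of voter i assigned
   from highest to lowest along her ranking *)
definition util :: "nat \<Rightarrow> (nat \<Rightarrow> nat \<Rightarrow> nat) \<Rightarrow> (nat \<times> nat \<Rightarrow> real) \<Rightarrow> nat \<Rightarrow> nat \<Rightarrow> real" where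
  "util m pos \<omega> i j = kth_largest m (pos i j) (\<lambda>l. \<omega> (i, l))"

definition sw :: "nat \<Rightarrow> nat \<Rightarrow> (nat \<Rightarrow> nat \<Rightarrow> nat) \<Rightarrow> nat \<Rightarrow> (nat \<times> nat \<Rightarrow> real) \<Rightarrow> real" where
  "sw n m pos j \<omega> = (\<Sum>i<n. util m pos \<omega> i j)"

definition expected_sw :: "real measure \<Rightarrow> nat \<Rightarrow> nat \<Rightarrow> (nat \<Rightarrow> nat \<Rightarrow> nat) \<Rightarrow> nat \<Rightarrow> real" where
  "expected_sw D n m pos j = integral\<^sup>L (sample_space n m D) (sw n m pos j)"

definition quantile :: "real measure \<Rightarrow> real \<Rightarrow> real" where
  "quantile D q = Sup {y. measure D {..y} \<le> q}"

definition pext :: "nat \<Rightarrow> (nat \<Rightarrow> real) \<Rightarrow> nat \<Rightarrow> real" where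
  "pext T p t = (if t = T + 1 then 1 else p t)"

definition binom_tail :: "nat \<Rightarrow> nat \<Rightarrow> real \<Rightarrow> real" where
  "binom_tail m k q = (\<Sum>l=k..m. real (m choose l) * (1 - q) ^ l * q ^ (m - l))"

definition gbv_score :: "real measure \<Rightarrow> nat \<Rightarrow> (nat \<Rightarrow> real) \<Rightarrow> nat \<Rightarrow> nat \<Rightarrow> real" where
  "gbv_score D T p m k = (\<Sum>t=1..T. quantile D (p t) *
      (binom_tail m k (pext T p t) - binom_tail m k (pext T p (t + 1))))"

definition total_score :: "real measure \<Rightarrow> nat \<Rightarrow> (nat \<Rightarrow> real) \<Rightarrow> nat \<Rightarrow> nat \<Rightarrow> (nat \<Rightarrow> nat \<Rightarrow> nat) \<Rightarrow> nat \<Rightarrow> real" where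
  "total_score D T p n m pos j = (\<Sum>i<n. gbv_score D T p m (pos i j))"

definition gbv_beta :: "real measure \<Rightarrow> nat \<Rightarrow> (nat \<Rightarrow> real) \<Rightarrow> real" where
  "gbv_beta D T p = (\<Sum>s=1..T. quantile D (p s) * (pext T p (s + 1) - pext T p s))"

end

theory Submission
  imports Defs
begin

text \<open>Write \<open>X\<^sub>k\<close> for the \<open>k\<close>-th largest of \<open>m\<close> independent samples from \<open>D\<close>. The
  score \<open>s\<^sub>k\<close> is a lower bound for \<open>E X\<^sub>k\<close>. Summation by parts gives
  \<open>s\<^sub>k = \<Sum>\<^sub>t (Q\<^sub>t - Q\<^sub>t\<^sub>-\<^sub>1) Pr[Bin(m, 1 - p\<^sub>t) \<ge> k]\<close> with \<open>Q\<^sub>0 = 0\<close>. Each sample is at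
  least \<open>Q\<^sub>t\<close> with probability at least \<open>1 - p\<^sub>t\<close>, so that binomial tail is at most
  \<open>Pr[X\<^sub>k \<ge> Q\<^sub>t]\<close>, and the step function \<open>\<Sum>\<^sub>t (Q\<^sub>t - Q\<^sub>t\<^sub>-\<^sub>1) [Q\<^sub>t \<le> X\<^sub>k]\<close> lies below
  \<open>X\<^sub>k\<close>. Hence the total score of every alternative is at most its expected welfare.
  Since the binomial tails add up to the mean, \<open>\<Sum>\<^sub>k s\<^sub>k = m \<beta>\<close>: the winner's total score
  is at least the average \<open>n \<beta>\<close>, while every expected welfare is at most \<open>n\<close> because the
  utilities lie in \<open>[0,1]\<close>.\<close>

section \<open>Order statistics\<close>

lemma sorted_nth_ge_iff_card:
  fixes ys :: "'a::linorder list"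
  assumes sorted: "sorted ys" and j: "j < length ys"
  shows "c \<le> ys ! j \<longleftrightarrow> length ys - j \<le> card {i. i < length ys \<and> c \<le> ys ! i}"
proof
  assume "c \<le> ys ! j"
  then have "{j..<length ys} \<subseteq> {i. i < length ys \<and> c \<le> ys ! i}"
    using sorted_nth_mono[OF sorted] by (auto intro: order_trans)
  from card_mono[OF _ this] show "length ys - j \<le> card {i. i < length ys \<and> c \<le> ys ! i}"
    by simp
next
  assume card_ge: "length ys - j \<le> card {i. i < length ys \<and> c \<le> ys ! i}"
  show "c \<le> ys ! j"
  proof (rule ccontr)
    assume "\<not> c \<le> ys ! j"
    then have "{i. i < length ys \<and> c \<le> ys ! i} \<subseteq> {Suc j..<length ys}"
      using sorted_nth_mono[OF sorted, of _ j] j by (force simp: not_less_eq_eq[symmetric])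
    from card_mono[OF _ this] have "card {i. i < length ys \<and> c \<le> ys ! i} \<le> length ys - Suc j"
      by simp
    with card_ge j show False by linarith
  qed
qed

lemma le_kth_largest_iff:
  assumes "1 \<le> k" "k \<le> m"
  shows "c \<le> kth_largest m k x \<longleftrightarrow> k \<le> card {l\<in>{..<m}. c \<le> x l}"
proof -
  define ys where "ys = sort (map x [0..<m])"
  have len: "length ys = m" by (simp add: ys_def)
  have kth: "kth_largest m k x = ys ! (m - k)"
    using assms len by (simp add: kth_largest_def ys_def[symmetric] rev_nth)
  have "card {i. i < length ys \<and> c \<le> ys ! i} = length (filter (\<lambda>y. c \<le> y) ys)"
    by (simp add: length_filter_conv_card)
  also have "\<dots> = length (filter (\<lambda>y. c \<le> y) (map x [0..<m]))"
    unfolding ys_def by (metis mset_filter mset_sort size_mset)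
  also have "\<dots> = card {l\<in>{..<m}. c \<le> x l}"
    by (auto simp: length_filter_conv_card intro!: arg_cong[where f = card])
  finally have "card {i. i < length ys \<and> c \<le> ys ! i} = card {l\<in>{..<m}. c \<le> x l}" .
  moreover have "sorted ys" by (simp add: ys_def)
  ultimately show ?thesis
    using sorted_nth_ge_iff_card[of ys "m - k" c] assms len by (simp add: kth)
qed

lemma kth_largest_in_image:
  assumes "1 \<le> k" "k \<le> m"
  shows "kth_largest m k x \<in> x ` {..<m}"
proof -
  have "kth_largest m k x \<in> set (rev (sort (map x [0..<m])))"
    unfolding kth_largest_def using assms by (intro nth_mem) simp
  then show ?thesis by auto
qed

section \<open>Binomial tails\<close>

lemma binom_tail_0: "binom_tail m 0 q = 1"
proof -
  have "binom_tail m 0 q = (\<Sum>l\<le>m. real (m choose l) * (1 - q) ^ l * q ^ (m - l))"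
    unfolding binom_tail_def by (simp add: atLeast0AtMost)
  also have "\<dots> = ((1 - q) + q) ^ m" by (rule binomial_ring[symmetric])
  finally show ?thesis by simp
qed

lemma binom_tail_gt: "m < k \<Longrightarrow> binom_tail m k q = 0"
  unfolding binom_tail_def by simp

lemma binom_tail_one: "1 \<le> k \<Longrightarrow> binom_tail m k 1 = 0"
  unfolding binom_tail_def by (intro sum.neutral) auto

lemma binom_tail_Suc_Suc:
  "binom_tail (Suc m) (Suc k) q = q * binom_tail m (Suc k) q + (1 - q) * binom_tail m k q"
proof -
  define a where "a = 1 - q"
  have "binom_tail (Suc m) (Suc k) q
      = (\<Sum>l=k..m. real (Suc m choose Suc l) * a ^ Suc l * q ^ (m - l))"
    unfolding binom_tail_def a_def sum.shift_bounds_cl_Suc_ivl by simp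
  also have "\<dots> = (\<Sum>l=k..m. real (m choose Suc l) * a ^ Suc l * q ^ (m - l))
      + a * (\<Sum>l=k..m. real (m choose l) * a ^ l * q ^ (m - l))"
    by (simp add: sum.distrib[symmetric] sum_distrib_left algebra_simps)
  also have "(\<Sum>l=k..m. real (m choose Suc l) * a ^ Suc l * q ^ (m - l))
      = (\<Sum>l=Suc k..Suc m. real (m choose l) * a ^ l * q ^ (Suc m - l))"
    unfolding sum.shift_bounds_cl_Suc_ivl by simp
  also have "\<dots> = (\<Sum>l=Suc k..m. real (m choose l) * a ^ l * q ^ (Suc m - l))"
    by (simp add: sum.cl_ivl_Suc)
  also have "\<dots> = q * (\<Sum>l=Suc k..m. real (m choose l) * a ^ l * q ^ (m - l))"
    unfolding sum_distrib_left by (intro sum.cong) (auto simp: Suc_diff_le)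
  finally show ?thesis unfolding binom_tail_def a_def by simp
qed

lemma sum_binom_tail: "(\<Sum>k=1..m. binom_tail m k q) = real m * (1 - q)"
proof (induction m)
  case 0
  then show ?case by simp
next
  case (Suc m)
  have shift: "(\<Sum>k=1..Suc m. f k) = (\<Sum>k=0..m. f (Suc k))" for f :: "nat \<Rightarrow> real"
    using sum.shift_bounds_cl_Suc_ivl[of f 0 m] by simp
  have "(\<Sum>k=1..Suc m. binom_tail (Suc m) k q)
      = q * (\<Sum>k=0..m. binom_tail m (Suc k) q) + (1 - q) * (\<Sum>k=0..m. binom_tail m k q)"
    unfolding shift by (simp add: binom_tail_Suc_Suc sum.distrib sum_distrib_left)
  also have "(\<Sum>k=0..m. binom_tail m (Suc k) q) = (\<Sum>k=1..m. binom_tail m k q)"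
    using shift[of "\<lambda>k. binom_tail m k q"] by (simp add: sum.cl_ivl_Suc binom_tail_gt)
  also have "(\<Sum>k=0..m. binom_tail m k q) = 1 + (\<Sum>k=1..m. binom_tail m k q)"
    by (simp add: sum.atLeast_Suc_atMost binom_tail_0)
  finally show ?case using Suc.IH by (simp add: algebra_simps)
qed

section \<open>Summation by parts\<close>

lemma summation_by_parts:
  fixes Q B :: "nat \<Rightarrow> 'a::comm_ring"
  shows "(\<Sum>t=1..N. Q t * (B t - B (Suc t)))
       = (\<Sum>t=1..N. (Q t - Q (t - 1)) * B t) + Q 0 * B 1 - Q N * B (Suc N)"
  by (induction N) (simp_all add: sum.cl_ivl_Suc algebra_simps)

lemma sum_increments_below_le:
  fixes Q :: "nat \<Rightarrow> real"
  assumes "Q 0 = 0" and mono: "\<And>t. t < N \<Longrightarrow> Q t \<le> Q (Suc t)" and "0 \<le> x"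
  shows "(\<Sum>t=1..N. (Q t - Q (t - 1)) * of_bool (Q t \<le> x)) \<le> x"
proof -
  have "(\<Sum>t=1..N. (Q t - Q (t - 1)) * of_bool (Q t \<le> x)) \<le> min x (Q N)"
    using mono
  proof (induction N)
    case 0
    then show ?case using assms by simp
  next
    case (Suc N)
    then have "(\<Sum>t=1..N. (Q t - Q (t - 1)) * of_bool (Q t \<le> x)) \<le> min x (Q N)"
      by simp
    moreover have "Q N \<le> Q (Suc N)" using Suc.prems by simp
    ultimately show ?case by (auto simp: sum.cl_ivl_Suc)
  qed
  then show ?thesis by simp
qed

section \<open>Counting hits of independent coordinates\<close>

definition hits_at_least :: "'a set \<Rightarrow> 'b set \<Rightarrow> nat \<Rightarrow> ('a \<Rightarrow> 'b) \<Rightarrow> real" where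
  "hits_at_least L S k x = of_bool (k \<le> card {i\<in>L. x i \<in> S})"

lemma hits_at_least_Suc_le: "hits_at_least L S (Suc k) x \<le> hits_at_least L S k x"
  by (simp add: hits_at_least_def)

lemma hits_at_least_upd_notin: "j \<notin> L \<Longrightarrow> hits_at_least L S k (x(j := y)) = hits_at_least L S k x"
  unfolding hits_at_least_def by (metis (no_types, lifting) fun_upd_other)

lemma hits_at_least_upd:
  assumes "finite L" "j \<in> L"
  shows "hits_at_least L S (Suc k) (x(j := y))
       = (if y \<in> S then hits_at_least (L - {j}) S k x else hits_at_least (L - {j}) S (Suc k) x)"
proof -
  have "{i\<in>L. (x(j := y)) i \<in> S}
      = (if y \<in> S then insert j {i\<in>L - {j}. x i \<in> S} else {i\<in>L - {j}. x i \<in> S})"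
    using assms(2) by auto
  then show ?thesis
    using assms(1) by (simp add: hits_at_least_def)
qed

lemma card_hits_eq_sum_indicator:
  "finite L \<Longrightarrow> card {i\<in>L. x i \<in> S} = (\<Sum>i\<in>L. indicator S (x i))"
  by (simp add: indicator_def sum.If_cases Int_def conj_commute)

lemma borel_measurable_hits_at_least:
  assumes "finite L" "L \<subseteq> J" "S \<in> sets M"
  shows "hits_at_least L S k \<in> borel_measurable (PiM J (\<lambda>_. M))"
  unfolding hits_at_least_def[abs_def] card_hits_eq_sum_indicator[OF assms(1)]
  by measurable (use assms in \<open>auto intro!: pred_sets2 measurable_component_singleton\<close>)

lemma (in prob_space) integrable_hits_at_least:
  assumes "finite L" "L \<subseteq> J" "S \<in> sets M"
  shows "integrable (PiM J (\<lambda>_. M)) (hits_at_least L S k)"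
proof -
  interpret product: prob_space "PiM J (\<lambda>_. M)"
    by (simp add: prob_space_PiM prob_space_axioms)
  show ?thesis
    using assms borel_measurable_hits_at_least
    by (intro product.integrable_const_bound[where B = 1]) (auto simp: hits_at_least_def)
qed

lemma (in prob_space) integral_hits_at_least_0:
  "(\<integral>x. hits_at_least L S 0 x \<partial>PiM J (\<lambda>_. M)) = 1"
proof -
  interpret product: prob_space "PiM J (\<lambda>_. M)"
    by (simp add: prob_space_PiM prob_space_axioms)
  show ?thesis by (simp add: hits_at_least_def product.prob_space)
qed

lemma (in prob_space) integral_PiM_insert_hits_at_least_notin:
  assumes "finite J" "j \<notin> J" "finite L" "L \<subseteq> J" "S \<in> sets M"
  shows "(\<integral>x. hits_at_least L S k x \<partial>PiM (insert j J) (\<lambda>_. M))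
       = (\<integral>x. hits_at_least L S k x \<partial>PiM J (\<lambda>_. M))"
proof -
  interpret product_sigma_finite "\<lambda>_. M"
    by unfold_locales
  have "(\<integral>x. hits_at_least L S k x \<partial>PiM (insert j J) (\<lambda>_. M))
      = (\<integral>x. (\<integral>y. hits_at_least L S k (x(j := y)) \<partial>M) \<partial>PiM J (\<lambda>_. M))"
    using assms by (intro product_integral_insert integrable_hits_at_least) auto
  moreover have "j \<notin> L" using assms(2,4) by auto
  ultimately show ?thesis
    by (simp add: hits_at_least_upd_notin prob_space)
qed

lemma (in prob_space) integral_PiM_insert_hits_at_least:
  assumes "finite J" "j \<notin> J" "finite L" "L \<subseteq> insert j J" "j \<in> L" "S \<in> sets M"
  shows "(\<integral>x. hits_at_least L S (Suc k) x \<partial>PiM (insert j J) (\<lambda>_. M))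
       = (1 - prob S) * (\<integral>x. hits_at_least (L - {j}) S (Suc k) x \<partial>PiM J (\<lambda>_. M))
         + prob S * (\<integral>x. hits_at_least (L - {j}) S k x \<partial>PiM J (\<lambda>_. M))"
proof -
  interpret product_sigma_finite "\<lambda>_. M"
    by unfold_locales
  let ?G = "hits_at_least (L - {j}) S (Suc k)" and ?H = "hits_at_least (L - {j}) S k"
  have "(\<integral>x. hits_at_least L S (Suc k) x \<partial>PiM (insert j J) (\<lambda>_. M))
      = (\<integral>x. (\<integral>y. hits_at_least L S (Suc k) (x(j := y)) \<partial>M) \<partial>PiM J (\<lambda>_. M))"
    using assms by (intro product_integral_insert integrable_hits_at_least) auto
  also have "\<dots> = (\<integral>x. (1 - prob S) * ?G x + prob S * ?H x \<partial>PiM J (\<lambda>_. M))"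
  proof (intro Bochner_Integration.integral_cong refl)
    fix x
    have "hits_at_least L S (Suc k) (x(j := y)) = ?G x + (?H x - ?G x) * indicator S y" for y
      by (simp add: hits_at_least_upd[OF assms(3,5)] indicator_def)
    then have "(\<integral>y. hits_at_least L S (Suc k) (x(j := y)) \<partial>M) = ?G x + (?H x - ?G x) * prob S"
      using assms(6) by (simp add: prob_space less_top[symmetric])
    then show "(\<integral>y. hits_at_least L S (Suc k) (x(j := y)) \<partial>M) = (1 - prob S) * ?G x + prob S * ?H x"
      by (simp add: algebra_simps)
  qed
  also have "\<dots> = (1 - prob S) * integral\<^sup>L (PiM J (\<lambda>_. M)) ?G + prob S * integral\<^sup>L (PiM J (\<lambda>_. M)) ?H"
    using assms by (simp add: integrable_hits_at_least subset_insert_iff)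
  finally show ?thesis .
qed

lemma (in prob_space) binom_tail_le_integral_hits_at_least:
  assumes S: "S \<in> sets M" "1 - q \<le> prob S" and q: "0 \<le> q" "q \<le> 1"
    and "finite J" "L \<subseteq> J"
  shows "binom_tail (card L) k q \<le> (\<integral>x. hits_at_least L S k x \<partial>PiM J (\<lambda>_. M))"
  using \<open>finite J\<close> \<open>L \<subseteq> J\<close>
proof (induction J arbitrary: L k rule: finite_induct)
  case empty
  show ?case
  proof (cases k)
    case 0
    then show ?thesis by (simp add: integral_hits_at_least_0 binom_tail_0)
  next
    case (Suc k')
    then show ?thesis using empty by (simp add: binom_tail_gt hits_at_least_def)
  qed
next
  case (insert j J)
  have "finite L" using insert by (meson finite_insert finite_subset)
  show ?case
  proof (cases "j \<in> L")
    case False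
    then show ?thesis
      using insert \<open>finite L\<close> S by (simp add: integral_PiM_insert_hits_at_least_notin subset_insert)
  next
    case True
    define L' where "L' = L - {j}"
    have L': "L' \<subseteq> J" "card L = Suc (card L')"
      using insert True card_Suc_Diff1[OF \<open>finite L\<close> True] by (auto simp: L'_def)
    let ?E = "\<lambda>k. \<integral>x. hits_at_least L' S k x \<partial>PiM J (\<lambda>_. M)"
    show ?thesis
    proof (cases k)
      case 0
      then show ?thesis by (simp add: integral_hits_at_least_0 binom_tail_0)
    next
      case (Suc k')
      have "?E (Suc k') \<le> ?E k'"
        using insert.hyps L' S \<open>finite L\<close>
        by (intro integral_mono integrable_hits_at_least) (auto simp: L'_def hits_at_least_Suc_le)
      have "binom_tail (card L) k q
          = q * binom_tail (card L') (Suc k') q + (1 - q) * binom_tail (card L') k' q"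
        unfolding Suc L'(2) binom_tail_Suc_Suc ..
      also have "\<dots> \<le> q * ?E (Suc k') + (1 - q) * ?E k'"
        using insert.IH L' q by (intro add_mono mult_left_mono) auto
      also have "\<dots> = ?E (Suc k') + (?E k' - ?E (Suc k')) * (1 - q)"
        by (simp add: algebra_simps)
      also have "\<dots> \<le> ?E (Suc k') + (?E k' - ?E (Suc k')) * prob S"
        using \<open>?E (Suc k') \<le> ?E k'\<close> S(2) by (intro add_left_mono mult_left_mono) auto
      also have "\<dots> = (1 - prob S) * ?E (Suc k') + prob S * ?E k'"
        by (simp add: algebra_simps)
      also have "\<dots> = (\<integral>x. hits_at_least L S k x \<partial>PiM (insert j J) (\<lambda>_. M))"
        using insert \<open>finite L\<close> True S
        by (simp add: Suc L'_def integral_PiM_insert_hits_at_least)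
      finally show ?thesis .
    qed
  qed
qed

lemma of_bool_le_kth_largest_coords:
  assumes "inj_on c {..<m}" "1 \<le> k" "k \<le> m"
  shows "of_bool (a \<le> kth_largest m k (\<lambda>l. x (c l))) = hits_at_least (c ` {..<m}) {a..} k x"
proof -
  have "{i \<in> c ` {..<m}. x i \<in> {a..}} = c ` {l\<in>{..<m}. a \<le> x (c l)}"
    by auto
  moreover have "inj_on c {l\<in>{..<m}. a \<le> x (c l)}"
    using assms(1) by (rule inj_on_subset) auto
  ultimately show ?thesis
    using assms(2,3) by (simp add: hits_at_least_def le_kth_largest_iff card_image)
qed

section \<open>Distributions on the unit interval\<close>

locale unit_interval_distribution = real_distribution D for D :: "real measure" +
  assumes prob_unit_interval: "prob {0..1} = 1"
begin

lemma cdf_eq_0: "x < 0 \<Longrightarrow> cdf D x = 0"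
proof -
  assume "x < 0"
  then have "cdf D x \<le> prob (space D - {0..1})"
    unfolding cdf_def by (intro finite_measure_mono) auto
  also have "\<dots> = 0"
    using prob_compl[of "{0..1}"] prob_unit_interval by simp
  finally show ?thesis using cdf_nonneg[of x] by linarith
qed

lemma cdf_eq_1: "1 \<le> x \<Longrightarrow> cdf D x = 1"
proof -
  assume "1 \<le> x"
  then have "prob {0..1} \<le> cdf D x"
    unfolding cdf_def by (intro finite_measure_mono) auto
  then show ?thesis using cdf_bounded_prob[of x] prob_unit_interval by linarith
qed

lemma quantile_eq_Sup: "quantile D q = Sup {y. cdf D y \<le> q}"
  unfolding quantile_def cdf_def ..

context
  fixes q :: real
  assumes q: "0 \<le> q" "q < 1"
begin

lemma lessThan_0_subset_quantile_set: "{..<0} \<subseteq> {y. cdf D y \<le> q}"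
  using q by (auto simp: cdf_eq_0)

lemma quantile_set_subset_lessThan_1: "{y. cdf D y \<le> q} \<subseteq> {..<1}"
  using q cdf_eq_1 by (force simp: not_less[symmetric])

lemma quantile_set_nonempty: "{y. cdf D y \<le> q} \<noteq> {}"
  using lessThan_0_subset_quantile_set[THEN subsetD, of "-1"] by auto

lemma bdd_above_quantile_set: "bdd_above {y. cdf D y \<le> q}"
  using quantile_set_subset_lessThan_1 by (meson bdd_above_Iio bdd_above_mono)

lemma quantile_nonneg: "0 \<le> quantile D q"
proof -
  have "Sup {..<0::real} \<le> quantile D q"
    unfolding quantile_eq_Sup using lessThan_0_subset_quantile_set bdd_above_quantile_set
    by (intro cSup_subset_mono) auto
  then show ?thesis by simp
qed

lemma quantile_le_1: "quantile D q \<le> 1"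
  unfolding quantile_eq_Sup using lessThan_0_subset_quantile_set quantile_set_subset_lessThan_1
  by (intro cSup_least) force+

lemma quantile_mono: "q \<le> q' \<Longrightarrow> q' < 1 \<Longrightarrow> quantile D q \<le> quantile D q'"
  unfolding quantile_eq_Sup using quantile_set_nonempty q
  by (intro cSup_subset_mono unit_interval_distribution.bdd_above_quantile_set)
     (auto intro: unit_interval_distribution_axioms)

lemma prob_atLeast_quantile: "1 - q \<le> prob {quantile D q..}"
proof -
  have "prob {..<quantile D q} \<le> q"
  proof (rule tendsto_upperbound[OF cdf_at_left])
    have "cdf D y \<le> q" if y: "y < quantile D q" for y
    proof -
      obtain y' where "cdf D y' \<le> q" "y < y'"
        using y less_cSup_iff[OF quantile_set_nonempty bdd_above_quantile_set, of y]
        by (auto simp: quantile_eq_Sup)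
      then show ?thesis using cdf_nondecreasing[of y y'] by simp
    qed
    then show "\<forall>\<^sub>F y in at_left (quantile D q). cdf D y \<le> q"
      by (auto simp: eventually_at_left_field intro: exI[of _ "quantile D q - 1"])
  qed simp
  moreover have "prob {quantile D q..} = 1 - prob {..<quantile D q}"
    using prob_compl[of "{..<quantile D q}"] by (simp add: Compl_eq_Diff_UNIV[symmetric] not_less)
  ultimately show ?thesis by simp
qed

end

lemma AE_PiM_unit_interval: "finite I \<Longrightarrow> AE x in PiM I (\<lambda>_. D). \<forall>i\<in>I. x i \<in> {0..1}"
  using prob_unit_interval
  by (intro AE_finite_allI AE_PiM_component AE_prob_1) (auto intro: prob_space_axioms)

end

context unit_interval_distribution
begin

context
  fixes I :: "'i set" and c :: "nat \<Rightarrow> 'i" and m k :: nat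
  assumes I: "finite I" "c ` {..<m} \<subseteq> I" and c: "inj_on c {..<m}" and k: "1 \<le> k" "k \<le> m"
begin

lemma borel_measurable_kth_largest_coords:
  "(\<lambda>x. kth_largest m k (\<lambda>l. x (c l))) \<in> borel_measurable (PiM I (\<lambda>_. D))"
  unfolding borel_measurable_iff_ge
proof
  fix a
  have "{x \<in> space (PiM I (\<lambda>_. D)). a \<le> kth_largest m k (\<lambda>l. x (c l))}
      = {x \<in> space (PiM I (\<lambda>_. D)). hits_at_least (c ` {..<m}) {a..} k x = 1}"
    using of_bool_le_kth_largest_coords[OF c k, of a] by (metis (mono_tags) of_bool_eq_1_iff)
  also have "\<dots> \<in> sets (PiM I (\<lambda>_. D))"
    using borel_measurable_hits_at_least[of "c ` {..<m}" I "{a..}" D k] I by measurable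
  finally show "{x \<in> space (PiM I (\<lambda>_. D)). a \<le> kth_largest m k (\<lambda>l. x (c l))}
      \<in> sets (PiM I (\<lambda>_. D))" .
qed

lemma AE_kth_largest_coords_unit_interval:
  "AE x in PiM I (\<lambda>_. D). kth_largest m k (\<lambda>l. x (c l)) \<in> {0..1}"
  using AE_PiM_unit_interval[OF I(1)]
proof eventually_elim
  case (elim x)
  then show ?case
    using kth_largest_in_image[OF k, of "\<lambda>l. x (c l)"] I(2) by auto
qed

lemma integrable_kth_largest_coords:
  "integrable (PiM I (\<lambda>_. D)) (\<lambda>x. kth_largest m k (\<lambda>l. x (c l)))"
proof -
  interpret product: prob_space "PiM I (\<lambda>_. D)"
    by (simp add: prob_space_PiM prob_space_axioms)
  show ?thesis
    using AE_kth_largest_coords_unit_interval borel_measurable_kth_largest_coords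
    by (intro product.integrable_const_bound[where B = 1]) (auto elim: AE_mp)
qed

lemma integral_kth_largest_coords_le_1:
  "(\<integral>x. kth_largest m k (\<lambda>l. x (c l)) \<partial>PiM I (\<lambda>_. D)) \<le> 1"
proof -
  interpret product: prob_space "PiM I (\<lambda>_. D)"
    by (simp add: prob_space_PiM prob_space_axioms)
  have "(\<integral>x. kth_largest m k (\<lambda>l. x (c l)) \<partial>PiM I (\<lambda>_. D)) \<le> (\<integral>x. 1 \<partial>PiM I (\<lambda>_. D))"
    using AE_kth_largest_coords_unit_interval integrable_kth_largest_coords
    by (intro integral_mono_AE) (auto elim: AE_mp)
  then show ?thesis by (simp add: product.prob_space)
qed

end

end

section \<open>Generalized binomial voting\<close>

locale gbv_rule = unit_interval_distribution D for D +
  fixes T :: nat and p :: "nat \<Rightarrow> real"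
  assumes p_1_nonneg: "0 \<le> p 1"
    and p_step_mono: "\<And>t. 1 \<le> t \<Longrightarrow> t < T \<Longrightarrow> p t \<le> p (Suc t)"
    and p_T_le_1: "p T \<le> 1"
begin

lemma pext_mono:
  assumes "1 \<le> s" "s \<le> t" "t \<le> Suc T"
  shows "pext T p s \<le> pext T p t"
proof (rule lift_Suc_mono_le_ivl[where N = "{1..T}"])
  show "pext T p n \<le> pext T p (Suc n)" if "n \<in> {1..T}" for n
    using that p_T_le_1 p_step_mono[of n] by (auto simp: pext_def)
qed (use assms in auto)

lemma pext_nonneg: "1 \<le> t \<Longrightarrow> t \<le> Suc T \<Longrightarrow> 0 \<le> pext T p t"
  using pext_mono[of 1 t] p_1_nonneg by (auto simp: pext_def split: if_splits)

lemma pext_le_1: "1 \<le> t \<Longrightarrow> t \<le> Suc T \<Longrightarrow> pext T p t \<le> 1"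
  using pext_mono[of t "Suc T"] by (simp add: pext_def)

lemma p_nonneg: "1 \<le> t \<Longrightarrow> t \<le> T \<Longrightarrow> 0 \<le> p t"
  using pext_nonneg[of t] by (simp add: pext_def)

lemma p_le_1: "1 \<le> t \<Longrightarrow> t \<le> T \<Longrightarrow> p t \<le> 1"
  using pext_le_1[of t] by (simp add: pext_def)

lemma pext_eq_1:
  "1 \<le> t \<Longrightarrow> t \<le> T \<Longrightarrow> p t = 1 \<Longrightarrow> pext T p t = 1 \<and> pext T p (Suc t) = 1"
  using pext_mono[of t "Suc t"] pext_le_1[of "Suc t"] by (simp add: pext_def)

(* Q_t of the rule, extended by Q_0 = 0 and capped at 1 where p_t = 1, because there
   quantile D 1 = Sup UNIV is a junk value. *)
definition threshold :: "nat \<Rightarrow> real" where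
  "threshold t = (if t = 0 then 0 else if p t < 1 then quantile D (p t) else 1)"

lemma threshold_0 [simp]: "threshold 0 = 0"
  by (simp add: threshold_def)

lemma threshold_nonneg: "t \<le> T \<Longrightarrow> 0 \<le> threshold t"
  using quantile_nonneg p_nonneg by (simp add: threshold_def)

lemma threshold_le_1: "t \<le> T \<Longrightarrow> threshold t \<le> 1"
  using quantile_le_1 p_nonneg by (simp add: threshold_def)

lemma threshold_mono:
  assumes "t < T"
  shows "threshold t \<le> threshold (Suc t)"
proof (cases "t = 0 \<or> \<not> p (Suc t) < 1")
  case True
  then show ?thesis
    using assms threshold_nonneg[of "Suc t"] threshold_le_1[of t] by (auto simp: threshold_def)
next
  case False
  then show ?thesis
    using assms p_step_mono[of t] p_nonneg[of t] quantile_mono[of "p t" "p (Suc t)"]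
    by (simp add: threshold_def)
qed

lemma threshold_increment_nonneg: "1 \<le> t \<Longrightarrow> t \<le> T \<Longrightarrow> 0 \<le> threshold t - threshold (t - 1)"
  using threshold_mono[of "t - 1"] by simp

lemma sum_threshold_increments_le:
  "0 \<le> x \<Longrightarrow> (\<Sum>t=1..T. (threshold t - threshold (t - 1)) * of_bool (threshold t \<le> x)) \<le> x"
  using threshold_mono by (intro sum_increments_below_le) auto

lemma prob_atLeast_threshold: "1 \<le> t \<Longrightarrow> t \<le> T \<Longrightarrow> 1 - p t \<le> prob {threshold t..}"
  using prob_atLeast_quantile[of "p t"] p_nonneg[of t] p_le_1[of t] by (auto simp: threshold_def)

lemma quantile_mult_eq_threshold_mult:
  "1 \<le> t \<Longrightarrow> t \<le> T \<Longrightarrow> (p t = 1 \<Longrightarrow> a = 0) \<Longrightarrow> quantile D (p t) * a = threshold t * a"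
  using p_le_1[of t] by (auto simp: threshold_def)

lemma gbv_score_eq_threshold_sum:
  assumes "1 \<le> k"
  shows "gbv_score D T p m k
       = (\<Sum>t=1..T. threshold t * (binom_tail m k (pext T p t) - binom_tail m k (pext T p (t + 1))))"
  unfolding gbv_score_def using assms
  by (intro sum.cong refl quantile_mult_eq_threshold_mult) (simp_all add: pext_eq_1 binom_tail_one)

lemma gbv_score_eq_sum_increments:
  assumes "1 \<le> k"
  shows "gbv_score D T p m k = (\<Sum>t=1..T. (threshold t - threshold (t - 1)) * binom_tail m k (p t))"
proof -
  define B where "B t = binom_tail m k (pext T p t)" for t
  have "gbv_score D T p m k = (\<Sum>t=1..T. threshold t * (B t - B (t + 1)))"
    unfolding B_def using assms by (rule gbv_score_eq_threshold_sum)
  also have "\<dots> = (\<Sum>t=1..T. (threshold t - threshold (t - 1)) * B t)"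
    using summation_by_parts[of threshold B T] assms by (simp add: B_def pext_def binom_tail_one)
  also have "\<dots> = (\<Sum>t=1..T. (threshold t - threshold (t - 1)) * binom_tail m k (p t))"
    unfolding B_def by (intro sum.cong refl) (simp add: pext_def)
  finally show ?thesis .
qed

lemma gbv_beta_nonneg: "0 \<le> gbv_beta D T p"
proof -
  have "gbv_beta D T p = (\<Sum>t=1..T. threshold t * (pext T p (t + 1) - pext T p t))"
    unfolding gbv_beta_def
    by (intro sum.cong refl quantile_mult_eq_threshold_mult) (simp_all add: pext_eq_1)
  also have "\<dots> \<ge> 0"
    using threshold_nonneg pext_mono by (intro sum_nonneg mult_nonneg_nonneg) auto
  finally show ?thesis .
qed

end

lemma (in gbv_rule) gbv_score_le_integral_kth_largest_coords:
  assumes I: "finite I" "c ` {..<m} \<subseteq> I" and c: "inj_on c {..<m}" and k: "1 \<le> k" "k \<le> m"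
  shows "gbv_score D T p m k \<le> (\<integral>x. kth_largest m k (\<lambda>l. x (c l)) \<partial>PiM I (\<lambda>_. D))"
proof -
  let ?M = "PiM I (\<lambda>_. D)" and ?L = "c ` {..<m}"
  define X where "X x = kth_largest m k (\<lambda>l. x (c l))" for x
  define hits where "hits t = hits_at_least ?L {threshold t..} k" for t
  have hits_integrable: "integrable ?M (hits t)" for t
    unfolding hits_def using I by (intro integrable_hits_at_least) auto
  have "gbv_score D T p m k = (\<Sum>t=1..T. (threshold t - threshold (t - 1)) * binom_tail m k (p t))"
    using k(1) by (rule gbv_score_eq_sum_increments)
  also have "\<dots> \<le> (\<Sum>t=1..T. (threshold t - threshold (t - 1)) * integral\<^sup>L ?M (hits t))"
  proof (intro sum_mono mult_left_mono)
    fix t assume t: "t \<in> {1..T}"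
    then show "0 \<le> threshold t - threshold (t - 1)" by (intro threshold_increment_nonneg) auto
    have "binom_tail (card ?L) k (p t) \<le> integral\<^sup>L ?M (hits t)"
      unfolding hits_def
    proof (rule binom_tail_le_integral_hits_at_least)
      show "1 - p t \<le> prob {threshold t..}" "0 \<le> p t" "p t \<le> 1"
        using t prob_atLeast_threshold p_nonneg p_le_1 by auto
    qed (use I in auto)
    moreover have "card ?L = m" using c by (simp add: card_image)
    ultimately show "binom_tail m k (p t) \<le> integral\<^sup>L ?M (hits t)"
      by simp
  qed
  also have "\<dots> = (\<integral>x. (\<Sum>t=1..T. (threshold t - threshold (t - 1)) * hits t x) \<partial>?M)"
    using hits_integrable by simp
  also have "\<dots> \<le> (\<integral>x. X x \<partial>?M)"
  proof (rule integral_mono_AE)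
    show "integrable ?M X"
      unfolding X_def using I c k by (rule integrable_kth_largest_coords)
    show "AE x in ?M. (\<Sum>t=1..T. (threshold t - threshold (t - 1)) * hits t x) \<le> X x"
      using AE_kth_largest_coords_unit_interval[OF I c k]
    proof eventually_elim
      case (elim x)
      have "hits t x = of_bool (threshold t \<le> X x)" for t
        unfolding hits_def X_def of_bool_le_kth_largest_coords[OF c k] ..
      then have "(\<Sum>t=1..T. (threshold t - threshold (t - 1)) * hits t x)
          = (\<Sum>t=1..T. (threshold t - threshold (t - 1)) * of_bool (threshold t \<le> X x))"
        by simp
      also have "\<dots> \<le> X x"
        using elim by (intro sum_threshold_increments_le) (simp add: X_def)
      finally show ?case .
    qed
  qed (use hits_integrable in simp)
  finally show ?thesis unfolding X_def .
qed

lemma profile_pos_in_range: "is_profile n m pos \<Longrightarrow> i < n \<Longrightarrow> j \<in> {1..m} \<Longrightarrow> pos i j \<in> {1..m}"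
  unfolding is_profile_def by (meson bij_betwE)

context unit_interval_distribution
begin

lemma integrable_util:
  "i < n \<Longrightarrow> pos i j \<in> {1..m} \<Longrightarrow> integrable (sample_space n m D) (\<lambda>x. util m pos x i j)"
  unfolding sample_space_def util_def
  by (rule integrable_kth_largest_coords[where c = "Pair i"]) (auto simp: inj_on_def)

lemma integral_util_le_1:
  "i < n \<Longrightarrow> pos i j \<in> {1..m} \<Longrightarrow> (\<integral>x. util m pos x i j \<partial>sample_space n m D) \<le> 1"
  unfolding sample_space_def util_def
  by (rule integral_kth_largest_coords_le_1[where c = "Pair i"]) (auto simp: inj_on_def)

lemma expected_sw_eq_sum:
  assumes "is_profile n m pos" "j \<in> {1..m}"
  shows "expected_sw D n m pos j = (\<Sum>i<n. \<integral>x. util m pos x i j \<partial>sample_space n m D)"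
  unfolding expected_sw_def sw_def
proof (rule Bochner_Integration.integral_sum[where f = "\<lambda>i x. util m pos x i j"])
  show "integrable (sample_space n m D) (\<lambda>x. util m pos x i j)" if "i \<in> {..<n}" for i
    using that profile_pos_in_range[OF assms(1) _ assms(2), of i] by (intro integrable_util) auto
qed

lemma expected_sw_le:
  assumes "is_profile n m pos" "j \<in> {1..m}"
  shows "expected_sw D n m pos j \<le> real n"
proof -
  have "(\<integral>x. util m pos x i j \<partial>sample_space n m D) \<le> 1" if "i \<in> {..<n}" for i
    using that profile_pos_in_range[OF assms(1) _ assms(2), of i] by (intro integral_util_le_1) auto
  then have "(\<Sum>i<n. \<integral>x. util m pos x i j \<partial>sample_space n m D) \<le> (\<Sum>i<n. 1)"
    by (rule sum_mono)
  then show ?thesis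
    unfolding expected_sw_eq_sum[OF assms] by simp
qed

end

lemma (in gbv_rule) total_score_le_expected_sw:
  assumes "is_profile n m pos" "j \<in> {1..m}"
  shows "total_score D T p n m pos j \<le> expected_sw D n m pos j"
proof -
  have "gbv_score D T p m (pos i j) \<le> (\<integral>x. util m pos x i j \<partial>sample_space n m D)" if "i < n" for i
    using profile_pos_in_range[OF assms(1) that assms(2)] that
    unfolding sample_space_def util_def
    by (intro gbv_score_le_integral_kth_largest_coords[where c = "Pair i"]) (auto simp: inj_on_def)
  then show ?thesis
    unfolding total_score_def expected_sw_eq_sum[OF assms] by (intro sum_mono) auto
qed

lemma sum_gbv_score: "(\<Sum>k=1..m. gbv_score D T p m k) = real m * gbv_beta D T p"
proof -
  have "(\<Sum>k=1..m. gbv_score D T p m k)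
      = (\<Sum>t=1..T. quantile D (p t)
          * ((\<Sum>k=1..m. binom_tail m k (pext T p t)) - (\<Sum>k=1..m. binom_tail m k (pext T p (t + 1)))))"
    unfolding gbv_score_def
    by (subst sum.swap) (simp add: sum_subtractf right_diff_distrib sum_distrib_left)
  also have "\<dots> = real m * gbv_beta D T p"
    unfolding sum_binom_tail gbv_beta_def sum_distrib_left by (intro sum.cong refl) (simp add: algebra_simps)
  finally show ?thesis .
qed

lemma sum_total_score:
  assumes "is_profile n m pos"
  shows "(\<Sum>j=1..m. total_score D T p n m pos j) = real n * (real m * gbv_beta D T p)"
proof -
  have "(\<Sum>j=1..m. total_score D T p n m pos j) = (\<Sum>i<n. \<Sum>j=1..m. gbv_score D T p m (pos i j))"
    unfolding total_score_def by (rule sum.swap)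
  also have "\<dots> = (\<Sum>i<n. \<Sum>k=1..m. gbv_score D T p m k)"
    using assms unfolding is_profile_def by (intro sum.cong refl sum.reindex_bij_betw) auto
  finally show ?thesis by (simp only: sum_gbv_score) simp
qed

lemma gbv_ruleI:
  assumes "prob_space D" "sets D = sets borel" "measure D {0..1} = 1"
    and "0 < p 1" "\<And>t. 1 \<le> t \<Longrightarrow> t < T \<Longrightarrow> p t < p (t + 1)" "p T \<le> 1"
  shows "gbv_rule D T p"
proof (intro gbv_rule.intro unit_interval_distribution.intro real_distribution.intro
    gbv_rule_axioms.intro unit_interval_distribution_axioms.intro real_distribution_axioms.intro)
  show "0 \<le> p 1" using assms(4) by simp
  show "p t \<le> p (Suc t)" if "1 \<le> t" "t < T" for t using assms(5)[OF that] by simp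
qed (fact assms)+

theorem theorem8:
  fixes D :: "real measure" and T n m :: nat and p :: "nat \<Rightarrow> real"
    and pos :: "nat \<Rightarrow> nat \<Rightarrow> nat" and g :: nat
  assumes "prob_space D" and "sets D = sets borel" and "measure D {0..1} = 1"
    and "0 < p 1" and "\<And>t. 1 \<le> t \<Longrightarrow> t < T \<Longrightarrow> p t < p (t + 1)" and "p T \<le> 1"
    and "is_profile n m pos"
    and "g \<in> {1..m}"
    and "\<And>j. j \<in> {1..m} \<Longrightarrow> total_score D T p n m pos j \<le> total_score D T p n m pos g"
  shows "expected_sw D n m pos g \<ge> gbv_beta D T p * Max (expected_sw D n m pos ` {1..m})"
proof -
  interpret gbv_rule D T p
    using assms(1-6) by (rule gbv_ruleI)
  have "1 \<le> m" using assms(8) by simp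
  have "(\<Sum>j=1..m. total_score D T p n m pos j) \<le> real (card {1..m}) * total_score D T p n m pos g"
    by (rule sum_bounded_above) (rule assms(9))
  then have "real m * (real n * gbv_beta D T p) \<le> real m * total_score D T p n m pos g"
    unfolding sum_total_score[OF assms(7)] by (simp add: algebra_simps)
  then have average_le_g: "real n * gbv_beta D T p \<le> total_score D T p n m pos g"
    using \<open>1 \<le> m\<close> by simp
  have "gbv_beta D T p * Max (expected_sw D n m pos ` {1..m}) \<le> gbv_beta D T p * real n"
    using gbv_beta_nonneg expected_sw_le[OF assms(7)] \<open>1 \<le> m\<close>
    by (intro mult_left_mono) auto
  also have "\<dots> \<le> total_score D T p n m pos g"
    using average_le_g by (simp add: mult.commute)
  also have "\<dots> \<le> expected_sw D n m pos g"
    using assms(7,8) by (rule total_score_le_expected_sw)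
  finally show ?thesis .
qed

end
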